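(* Assume the Lipschitz condition on $f_t,r_t$. Then the operator $\mathcal{B}^{\mathrm{RQE}}_{\mathrm{prop}}$ is Lipschitz: there is a constant $K_{\mathrm{prop}}>0$ such that for all $\pi_a,\pi_b\in\Pi$, $d_{\mathcal{S}}(\mathcal{B}^{\mathrm{RQE}}_{\mathrm{prop}}(\pi_a),\mathcal{B}^{\mathrm{RQE}}_{\mathrm{prop}}(\pi_b))\le K_{\mathrm{prop}}\,d_\Pi(\pi_a,\pi_b)$.
   Context: Let $\mathcal{X},\mathcal{U}$ be finite nonempty sets and $T\ge1$. $\mathcal{P}(E)$ is the set of probability vectors on finite $E$ and $d_{TV}(\mu,\mu')=\frac12\|\mu-\mu'\|_1$. For $t\in\{0,\dots,T-1\}$: kernels $f_t(x'\mid x,u,\mu)$ (a distribution over $x'$ for each $x,u,\mu$) and rewards $r_t:\mathcal{X}\times\mathcal{U}\times\mathcal{P}(\mathcal{X})\to[-R_{\max},R_{\max}]$ with $\sum_{x'}|f_t(x'\mid x,u,\mu)-f_t(x'\mid x,u,\mu')|\le L_fd_{TV}(\mu,\mu')$ and $|r_t(x,u,\mu)-r_t(x,u,\mu')|\le L_rd_{TV}(\mu,\mu')$, $L_f,L_r>0$. A policy is $\pi=(\pi_0,\dots,\pi_{T-1})$ with $\pi_t(\cdot\mid x)\in\mathcal{P}(\mathcal{U})$; $\Pi$ is the set of policies and $d_\Pi(\pi,\pi')=\max_{x,t<T}d_{TV}(\pi_t(\cdot\mid x),\pi'_t(\cdot\mid x))$. Given $\pi$ and $\mu_0$, the mean-field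 flow satisfies $\mu_{t+1}(x')=\sum_x\sum_uf_t(x'\mid x,u,\mu_t)\pi_t(u\mid x)\mu_t(x)$. Given a finite set $\mathbb{M}=\{\mu_0^1,\dots,\mu_0^K\}\subset\mathcal{P}(\mathcal{X})$, $\mathcal{B}^{\mathrm{RQE}}_{\mathrm{prop}}(\pi)=\{\mu^1,\dots,\mu^K\}$ where $\mu^k$ is the flow generated by $\pi$ from $\mu_0^k$; for two such sets, $d_{\mathcal{S}}(\mathcal{S}^1,\mathcal{S}^2)=\max_{k\le K,\,t<T}d_{TV}(\mu^{1,k}_t,\mu^{2,k}_t)$. *)

theory Defs
  imports "HOL-Analysis.Analysis"
begin

definition is_dist :: "('a::finite \<Rightarrow> real) \<Rightarrow> bool" where
  "is_dist p \<longleftrightarrow> (\<forall>a. 0 \<le> p a) \<and> (\<Sum>a\<in>UNIV. p a) = 1"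

definition dTV :: "('a::finite \<Rightarrow> real) \<Rightarrow> ('a \<Rightarrow> real) \<Rightarrow> real" where
  "dTV p q = (1/2) * (\<Sum>a\<in>UNIV. \<bar>p a - q a\<bar>)"

text \<open>Policies: p t x u = pi_t(u | x), for t < T.\<close>
definition is_policy :: "nat \<Rightarrow> (nat \<Rightarrow> 'x::finite \<Rightarrow> 'u::finite \<Rightarrow> real) \<Rightarrow> bool" where
  "is_policy T p \<longleftrightarrow> (\<forall>t<T. \<forall>x. is_dist (p t x))"

definition dPi :: "nat \<Rightarrow> (nat \<Rightarrow> 'x::finite \<Rightarrow> 'u::finite \<Rightarrow> real)
    \<Rightarrow> (nat \<Rightarrow> 'x \<Rightarrow> 'u \<Rightarrow> real) \<Rightarrow> real" where
  "dPi T p q = Max {dTV (p t x) (q t x) | t x. t < T}"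

text \<open>Mean-field flow: f t x u mu x' = f_t(x' | x, u, mu).\<close>
fun mf_flow :: "(nat \<Rightarrow> 'x::finite \<Rightarrow> 'u::finite \<Rightarrow> ('x \<Rightarrow> real) \<Rightarrow> 'x \<Rightarrow> real)
    \<Rightarrow> (nat \<Rightarrow> 'x \<Rightarrow> 'u \<Rightarrow> real) \<Rightarrow> ('x \<Rightarrow> real) \<Rightarrow> nat \<Rightarrow> 'x \<Rightarrow> real" where
  "mf_flow f p mu0 0 = mu0"
| "mf_flow f p mu0 (Suc t) = (\<lambda>x'. \<Sum>x\<in>UNIV. \<Sum>u\<in>UNIV.
      f t x u (mf_flow f p mu0 t) x' * p t x u * mf_flow f p mu0 t x)"

definition B_prop :: "(nat \<Rightarrow> 'x::finite \<Rightarrow> 'u::finite \<Rightarrow> ('x \<Rightarrow> real) \<Rightarrow> 'x \<Rightarrow> real)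
    \<Rightarrow> ('x \<Rightarrow> real) list \<Rightarrow> (nat \<Rightarrow> 'x \<Rightarrow> 'u \<Rightarrow> real) \<Rightarrow> (nat \<Rightarrow> 'x \<Rightarrow> real) list" where
  "B_prop f M p = map (\<lambda>mu0. mf_flow f p mu0) M"

definition dS :: "nat \<Rightarrow> (nat \<Rightarrow> 'x::finite \<Rightarrow> real) list \<Rightarrow> (nat \<Rightarrow> 'x \<Rightarrow> real) list \<Rightarrow> real" where
  "dS T S1 S2 = Max {dTV ((S1 ! k) t) ((S2 ! k) t) | k t. k < length S1 \<and> t < T}"

end

theory Submission
  imports Defs
begin

(* One step of the mean-field flow is Lipschitz jointly in the state distribution and the policy:
   splitting the difference of two steps into a kernel, a policy and a state perturbation and
   bounding each in L1 gives  dTV mu_a' mu_b' <= (1 + Lf/2) dTV mu_a mu_b + dPi pi_a pi_b.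
   Unrolling this recurrence from the common initial distribution yields the constant
   K_prop = sum_{s<T} (1 + Lf/2)^s. *)

definition mf_step :: "('x::finite \<Rightarrow> 'u::finite \<Rightarrow> ('x \<Rightarrow> real) \<Rightarrow> 'x \<Rightarrow> real)
    \<Rightarrow> ('x \<Rightarrow> 'u \<Rightarrow> real) \<Rightarrow> ('x \<Rightarrow> real) \<Rightarrow> 'x \<Rightarrow> real" where
  "mf_step F P mu = (\<lambda>x'. \<Sum>x\<in>UNIV. \<Sum>u\<in>UNIV. F x u mu x' * P x u * mu x)"

lemma mf_flow_Suc: "mf_flow f p mu0 (Suc t) = mf_step (f t) (p t) (mf_flow f p mu0 t)"
  by (simp add: mf_step_def)

lemma is_dist_nonneg: "is_dist p \<Longrightarrow> 0 \<le> p a"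
  by (simp add: is_dist_def)

lemma is_dist_sum: "is_dist p \<Longrightarrow> (\<Sum>a\<in>UNIV. p a) = 1"
  by (simp add: is_dist_def)

lemma is_dist_sum_abs: "is_dist p \<Longrightarrow> (\<Sum>a\<in>UNIV. \<bar>p a\<bar>) = 1"
  by (simp add: is_dist_def)

lemma sum_joint_dist_eq_1:
  assumes "is_dist mu" and "\<And>x. is_dist (P x)"
  shows "(\<Sum>x\<in>UNIV. \<Sum>u\<in>UNIV. P x u * mu x) = 1"
  using assms by (simp add: is_dist_sum sum_distrib_right[symmetric])

lemma dTV_nonneg: "0 \<le> dTV p q"
  by (simp add: dTV_def sum_nonneg)

lemma dTV_self: "dTV p p = 0"
  by (simp add: dTV_def)

lemma sum_swap3:
  "(\<Sum>y\<in>UNIV. \<Sum>x\<in>UNIV. \<Sum>u\<in>UNIV. g x u y) = (\<Sum>x\<in>UNIV. \<Sum>u\<in>UNIV. \<Sum>y\<in>UNIV. g x u y)"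
  by (subst sum.swap) (rule sum.cong[OF refl sum.swap])

lemma is_dist_mf_step:
  assumes mu: "is_dist mu" and P: "\<And>x. is_dist (P x)" and F: "\<And>x u. is_dist (F x u mu)"
  shows "is_dist (mf_step F P mu)"
proof -
  have "(\<Sum>x'\<in>UNIV. mf_step F P mu x')
      = (\<Sum>x\<in>UNIV. \<Sum>u\<in>UNIV. (\<Sum>x'\<in>UNIV. F x u mu x') * P x u * mu x)"
    unfolding mf_step_def by (subst sum_swap3) (simp add: sum_distrib_right)
  also have "\<dots> = 1"
    using F sum_joint_dist_eq_1[OF mu P] by (simp add: is_dist_sum)
  finally show ?thesis
    using mu P F by (auto simp: is_dist_def mf_step_def intro!: sum_nonneg)
qed

lemma is_dist_mf_flow:
  assumes f_dist: "\<And>t x u mu. t < T \<Longrightarrow> is_dist mu \<Longrightarrow> is_dist (f t x u mu)"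
    and p: "is_policy T p" and mu0: "is_dist mu0"
  shows "t \<le> T \<Longrightarrow> is_dist (mf_flow f p mu0 t)"
proof (induction t)
  case 0
  then show ?case using mu0 by simp
next
  case (Suc t)
  then show ?case
    using p f_dist unfolding mf_flow_Suc is_policy_def by (simp add: is_dist_mf_step)
qed

lemma sum_abs_mixture_le:
  fixes G :: "'x::finite \<Rightarrow> 'u::finite \<Rightarrow> 'y::finite \<Rightarrow> real"
  shows "(\<Sum>y\<in>UNIV. \<bar>\<Sum>x\<in>UNIV. \<Sum>u\<in>UNIV. G x u y * w x u\<bar>)
    \<le> (\<Sum>x\<in>UNIV. \<Sum>u\<in>UNIV. \<bar>w x u\<bar> * (\<Sum>y\<in>UNIV. \<bar>G x u y\<bar>))"
proof -
  have "(\<Sum>y\<in>UNIV. \<bar>\<Sum>x\<in>UNIV. \<Sum>u\<in>UNIV. G x u y * w x u\<bar>)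
      \<le> (\<Sum>y\<in>UNIV. \<Sum>x\<in>UNIV. \<Sum>u\<in>UNIV. \<bar>G x u y * w x u\<bar>)"
    by (intro sum_mono, rule order_trans[OF sum_abs], intro sum_mono sum_abs)
  also have "\<dots> = (\<Sum>x\<in>UNIV. \<Sum>u\<in>UNIV. \<bar>w x u\<bar> * (\<Sum>y\<in>UNIV. \<bar>G x u y\<bar>))"
    by (subst sum_swap3) (simp add: sum_distrib_left abs_mult mult.commute)
  finally show ?thesis .
qed

lemma dTV_mf_step_le:
  fixes F :: "'x::finite \<Rightarrow> 'u::finite \<Rightarrow> ('x \<Rightarrow> real) \<Rightarrow> 'x \<Rightarrow> real"
  assumes mu: "is_dist mu" and nu: "is_dist nu"
    and P: "\<And>x. is_dist (P x)" and Q: "\<And>x. is_dist (Q x)"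
    and F_dist: "\<And>x u. is_dist (F x u nu)"
    and F_lip: "\<And>x u. (\<Sum>x'\<in>UNIV. \<bar>F x u mu x' - F x u nu x'\<bar>) \<le> Lf * dTV mu nu"
    and PQ: "\<And>x. dTV (P x) (Q x) \<le> \<delta>"
  shows "dTV (mf_step F P mu) (mf_step F Q nu) \<le> (1 + Lf / 2) * dTV mu nu + \<delta>"
proof -
  define kernel_term where
    "kernel_term = (\<lambda>x'. \<Sum>x\<in>UNIV. \<Sum>u\<in>UNIV. (F x u mu x' - F x u nu x') * (P x u * mu x))"
  define policy_term where
    "policy_term = (\<lambda>x'. \<Sum>x\<in>UNIV. \<Sum>u\<in>UNIV. F x u nu x' * ((P x u - Q x u) * mu x))"
  define state_term where
    "state_term = (\<lambda>x'. \<Sum>x\<in>UNIV. \<Sum>u\<in>UNIV. F x u nu x' * (Q x u * (mu x - nu x)))"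
  have split: "mf_step F P mu x' - mf_step F Q nu x' = kernel_term x' + policy_term x' + state_term x'"
    for x'
    unfolding mf_step_def kernel_term_def policy_term_def state_term_def
    by (simp add: sum.distrib[symmetric] sum_subtractf[symmetric] algebra_simps)
  have "(\<Sum>x'\<in>UNIV. \<bar>kernel_term x'\<bar>)
      \<le> (\<Sum>x\<in>UNIV. \<Sum>u\<in>UNIV. \<bar>P x u * mu x\<bar> * (Lf * dTV mu nu))"
    unfolding kernel_term_def
    by (rule order_trans[OF sum_abs_mixture_le]) (intro sum_mono mult_left_mono F_lip abs_ge_zero)
  also have "\<dots> = Lf * dTV mu nu"
    using mu P by (simp add: abs_mult is_dist_nonneg is_dist_sum sum_distrib_right[symmetric])
  finally have kernel: "(\<Sum>x'\<in>UNIV. \<bar>kernel_term x'\<bar>) \<le> Lf * dTV mu nu" .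
  have "(\<Sum>x'\<in>UNIV. \<bar>policy_term x'\<bar>)
      \<le> (\<Sum>x\<in>UNIV. \<Sum>u\<in>UNIV. \<bar>(P x u - Q x u) * mu x\<bar>)"
    unfolding policy_term_def
    using sum_abs_mixture_le[of "\<lambda>x u x'. F x u nu x'"] F_dist by (simp add: is_dist_sum_abs)
  also have "\<dots> = (\<Sum>x\<in>UNIV. mu x * (2 * dTV (P x) (Q x)))"
    using mu by (simp add: dTV_def abs_mult is_dist_nonneg sum_distrib_left sum_distrib_right mult.commute)
  also have "\<dots> \<le> (\<Sum>x\<in>UNIV. mu x * (2 * \<delta>))"
    using mu PQ by (intro sum_mono mult_left_mono) (auto simp: is_dist_nonneg)
  also have "\<dots> = 2 * \<delta>"
    using mu by (simp add: is_dist_sum sum_distrib_right[symmetric])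
  finally have policy: "(\<Sum>x'\<in>UNIV. \<bar>policy_term x'\<bar>) \<le> 2 * \<delta>" .
  have "(\<Sum>x'\<in>UNIV. \<bar>state_term x'\<bar>)
      \<le> (\<Sum>x\<in>UNIV. \<Sum>u\<in>UNIV. \<bar>Q x u * (mu x - nu x)\<bar>)"
    unfolding state_term_def
    using sum_abs_mixture_le[of "\<lambda>x u x'. F x u nu x'"] F_dist by (simp add: is_dist_sum_abs)
  also have "\<dots> = 2 * dTV mu nu"
    using Q by (simp add: dTV_def abs_mult is_dist_nonneg sum_distrib_right[symmetric] is_dist_sum)
  finally have state: "(\<Sum>x'\<in>UNIV. \<bar>state_term x'\<bar>) \<le> 2 * dTV mu nu" .
  have "2 * dTV (mf_step F P mu) (mf_step F Q nu)
      = (\<Sum>x'\<in>UNIV. \<bar>kernel_term x' + policy_term x' + state_term x'\<bar>)"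
    by (simp add: dTV_def split)
  also have "\<dots> \<le> (\<Sum>x'\<in>UNIV. \<bar>kernel_term x'\<bar>) + (\<Sum>x'\<in>UNIV. \<bar>policy_term x'\<bar>)
      + (\<Sum>x'\<in>UNIV. \<bar>state_term x'\<bar>)"
    by (simp add: sum.distrib[symmetric] sum_mono abs_triangle_ineq3)
  finally show ?thesis
    using kernel policy state by (simp add: field_simps)
qed

lemma linear_recurrence_bound:
  fixes d :: "nat \<Rightarrow> real"
  assumes d0: "d 0 = 0" and c: "0 \<le> c"
    and step: "\<And>t. t < n \<Longrightarrow> d (Suc t) \<le> c * d t + \<delta>"
  shows "t \<le> n \<Longrightarrow> d t \<le> (\<Sum>s<t. c ^ s) * \<delta>"
proof (induction t)
  case 0
  then show ?case using d0 by simp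
next
  case (Suc t)
  then have "d (Suc t) \<le> c * ((\<Sum>s<t. c ^ s) * \<delta>) + \<delta>"
    using step c by (intro order_trans[OF step] add_right_mono mult_left_mono) auto
  also have "\<dots> = (\<Sum>s<Suc t. c ^ s) * \<delta>"
    by (subst sum.lessThan_Suc_shift) (simp add: sum_distrib_left[symmetric] algebra_simps)
  finally show ?case .
qed

lemma dTV_mf_flow_le:
  fixes f :: "nat \<Rightarrow> 'x::finite \<Rightarrow> 'u::finite \<Rightarrow> ('x \<Rightarrow> real) \<Rightarrow> 'x \<Rightarrow> real"
  assumes f_dist: "\<And>t x u mu. t < T \<Longrightarrow> is_dist mu \<Longrightarrow> is_dist (f t x u mu)"
    and f_lip: "\<And>t x u mu mu'. t < T \<Longrightarrow> is_dist mu \<Longrightarrow> is_dist mu' \<Longrightarrow>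
        (\<Sum>x'\<in>UNIV. \<bar>f t x u mu x' - f t x u mu' x'\<bar>) \<le> Lf * dTV mu mu'"
    and Lf: "0 \<le> Lf"
    and pa: "is_policy T pa" and pb: "is_policy T pb" and mu0: "is_dist mu0"
    and pab: "\<And>t x. t < T \<Longrightarrow> dTV (pa t x) (pb t x) \<le> \<delta>"
    and t: "t \<le> T"
  shows "dTV (mf_flow f pa mu0 t) (mf_flow f pb mu0 t) \<le> (\<Sum>s<t. (1 + Lf / 2) ^ s) * \<delta>"
proof (rule linear_recurrence_bound[OF _ _ _ t])
  show "dTV (mf_flow f pa mu0 0) (mf_flow f pb mu0 0) = 0"
    by (simp add: dTV_self)
  show "0 \<le> 1 + Lf / 2"
    using Lf by simp
next
  fix t assume "t < T"
  then show "dTV (mf_flow f pa mu0 (Suc t)) (mf_flow f pb mu0 (Suc t))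
      \<le> (1 + Lf / 2) * dTV (mf_flow f pa mu0 t) (mf_flow f pb mu0 t) + \<delta>"
    using pa pb is_dist_mf_flow[OF f_dist pa mu0] is_dist_mf_flow[OF f_dist pb mu0]
    unfolding mf_flow_Suc is_policy_def
    by (intro dTV_mf_step_le f_dist f_lip pab) auto
qed

lemma dTV_le_dPi: "t < T \<Longrightarrow> dTV (p t x) (q t x) \<le> dPi T p q"
proof -
  assume "t < T"
  have "{dTV (p t x) (q t x) | t x. t < T} = (\<lambda>(t, x). dTV (p t x) (q t x)) ` ({..<T} \<times> UNIV)"
    by auto
  then show ?thesis
    unfolding dPi_def using \<open>t < T\<close> by (intro Max_ge) auto
qed

lemma dPi_nonneg: "0 < T \<Longrightarrow> 0 \<le> dPi T p q"
  using dTV_le_dPi[of 0 T p undefined q] dTV_nonneg by (metis order_trans)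

lemma dS_le:
  assumes "S1 \<noteq> []" and "0 < T"
    and "\<And>k t. k < length S1 \<Longrightarrow> t < T \<Longrightarrow> dTV ((S1 ! k) t) ((S2 ! k) t) \<le> B"
  shows "dS T S1 S2 \<le> B"
proof -
  have "{dTV ((S1 ! k) t) ((S2 ! k) t) | k t. k < length S1 \<and> t < T}
      = (\<lambda>(k, t). dTV ((S1 ! k) t) ((S2 ! k) t)) ` ({..<length S1} \<times> {..<T})"
    by auto
  then show ?thesis
    unfolding dS_def using assms by (intro Max.boundedI) auto
qed

theorem lemma5:
  fixes f :: "nat \<Rightarrow> 'x::finite \<Rightarrow> 'u::finite \<Rightarrow> ('x \<Rightarrow> real) \<Rightarrow> 'x \<Rightarrow> real"
    and r :: "nat \<Rightarrow> 'x \<Rightarrow> 'u \<Rightarrow> ('x \<Rightarrow> real) \<Rightarrow> real"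
    and T :: nat and Lf Lr Rmax :: real
    and M :: "('x \<Rightarrow> real) list"
  assumes T: "T \<ge> 1"
    and Lf: "Lf > 0" and Lr: "Lr > 0"
    and f_dist: "\<And>t x u mu. t < T \<Longrightarrow> is_dist mu \<Longrightarrow> is_dist (f t x u mu)"
    and r_bdd: "\<And>t x u mu. t < T \<Longrightarrow> is_dist mu \<Longrightarrow> \<bar>r t x u mu\<bar> \<le> Rmax"
    and f_lip: "\<And>t x u mu mu'. t < T \<Longrightarrow> is_dist mu \<Longrightarrow> is_dist mu' \<Longrightarrow>
        (\<Sum>x'\<in>UNIV. \<bar>f t x u mu x' - f t x u mu' x'\<bar>) \<le> Lf * dTV mu mu'"
    and r_lip: "\<And>t x u mu mu'. t < T \<Longrightarrow> is_dist mu \<Longrightarrow> is_dist mu' \<Longrightarrow>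
        \<bar>r t x u mu - r t x u mu'\<bar> \<le> Lr * dTV mu mu'"
    and M_ne: "M \<noteq> []"
    and M_dist: "\<And>mu0. mu0 \<in> set M \<Longrightarrow> is_dist mu0"
  shows "\<exists>Kprop > 0. \<forall>pa pb. is_policy T pa \<longrightarrow> is_policy T pb \<longrightarrow>
     dS T (B_prop f M pa) (B_prop f M pb) \<le> Kprop * dPi T pa pb"
proof (intro exI[of _ "\<Sum>s<T. (1 + Lf / 2) ^ s"] conjI allI impI)
  let ?K = "\<Sum>s<T. (1 + Lf / 2) ^ s"
  have "(1 + Lf / 2) ^ 0 \<le> ?K"
    using T Lf by (intro member_le_sum) auto
  then show "0 < ?K" by simp
  fix pa pb :: "nat \<Rightarrow> 'x \<Rightarrow> 'u \<Rightarrow> real"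
  assume pa: "is_policy T pa" and pb: "is_policy T pb"
  show "dS T (B_prop f M pa) (B_prop f M pb) \<le> ?K * dPi T pa pb"
  proof (rule dS_le)
    fix k t assume k: "k < length (B_prop f M pa)" and t: "t < T"
    have "dTV (mf_flow f pa (M ! k) t) (mf_flow f pb (M ! k) t) \<le> (\<Sum>s<t. (1 + Lf / 2) ^ s) * dPi T pa pb"
      using k t Lf
      by (intro dTV_mf_flow_le[OF f_dist f_lip _ pa pb M_dist dTV_le_dPi]) (auto simp: B_prop_def)
    also have "\<dots> \<le> ?K * dPi T pa pb"
      using t T Lf by (intro mult_right_mono sum_mono2 dPi_nonneg) auto
    finally show "dTV ((B_prop f M pa ! k) t) ((B_prop f M pb ! k) t) \<le> ?K * dPi T pa pb"
      using k by (simp add: B_prop_def)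
  qed (use M_ne T in \<open>auto simp: B_prop_def\<close>)
qed

end
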